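(* Let $\bm M_1,\bm M_2$ be real matrices of the same dimension with $\|\bm M_1\|_S=\mu$, $\|\bm M_2\|_S=\nu$. Let $\theta=\Theta(\bm M_1,\bm M_2)$ be the smallest principal angle between their column spaces and $\eta=\Theta(\bm M_1',\bm M_2')$ the smallest principal angle between their row spaces. Then $\|\bm M_1+\bm M_2\|_S^2\le\Lambda^2(\mu,\nu,\theta,\eta)$, where $$\Lambda^2(\mu,\nu,\theta,\eta)=\frac12\Big[\sqrt{(\mu^2+\nu^2+2\mu\nu\cos\theta\cos\eta)^2-4\mu^2\nu^2\sin^2\theta\sin^2\eta}+\mu^2+\nu^2+2\mu\nu\cos\theta\cos\eta\Big].$$
   Context: $\|\cdot\|_S$ is the spectral norm. For matrices $\bm M_1,\bm M_2$ with the same number of rows (both nonzero), the smallest principal angle $\Theta(\bm M_1,\bm M_2)\in[0,\pi/2]$ between their column spaces is defined by $\cos\Theta(\bm M_1,\bm M_2)=\sup\frac{u_1'\bm M_1'\bm M_2u_2}{\|\bm M_1u_1\|\,\|\bm M_2u_2\|}$, the supremum over $u_1,u_2$ with $\bm M_1u_1\ne0$, $\bm M_2u_2\ne0$. *)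

theory Defs
  imports "HOL-Analysis.Analysis"
begin

definition spec_norm :: "real^'n^'m \<Rightarrow> real" where
  "spec_norm M = onorm (\<lambda>x. M *v x)"

definition cos_principal_angle :: "real^'n^'m \<Rightarrow> real^'k^'m \<Rightarrow> real" where
  "cos_principal_angle M1 M2 =
     Sup {((M1 *v u1) \<bullet> (M2 *v u2)) / (norm (M1 *v u1) * norm (M2 *v u2)) | u1 u2.
            M1 *v u1 \<noteq> 0 \<and> M2 *v u2 \<noteq> 0}"

definition principal_angle :: "real^'n^'m \<Rightarrow> real^'k^'m \<Rightarrow> real" where
  "principal_angle M1 M2 = arccos (cos_principal_angle M1 M2)"

definition Lambda2 :: "real \<Rightarrow> real \<Rightarrow> real \<Rightarrow> real \<Rightarrow> real" where
  "Lambda2 \<mu> \<nu> \<theta> \<eta> =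
     (1/2) * (sqrt ((\<mu>^2 + \<nu>^2 + 2*\<mu>*\<nu>*cos \<theta>*cos \<eta>)^2
                    - 4*\<mu>^2*\<nu>^2*(sin \<theta>)^2*(sin \<eta>)^2)
              + \<mu>^2 + \<nu>^2 + 2*\<mu>*\<nu>*cos \<theta>*cos \<eta>)"

end

theory Submission
  imports Defs
begin

text \<open>Fix x and put t1 = \<parallel>M1 x\<parallel>/\<mu>, t2 = \<parallel>M2 x\<parallel>/\<nu>, so that 0 \<le> ti \<le> \<parallel>x\<parallel>. With c = cos \<theta>, the
  column-space angle bounds \<parallel>(M1 + M2) x\<parallel>^2 by the form \<mu>^2t1^2 + \<nu>^2t2^2 + 2c\<mu>\<nu> t1 t2.
  With d = cos \<eta>, testing x by Cauchy-Schwarz against the row-space vectors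
  (s/\<mu>^2) M1'M1 x + (r/\<nu>^2) M2'M2 x, s, r \<ge> 0, confines (t1, t2) to the ellipse
  t1^2 + t2^2 - 2d t1 t2 \<le> (1 - d^2)\<parallel>x\<parallel>^2 once the point lies in the sector d t1 \<le> t2, d t2 \<le> t1;
  outside that sector, moving the point onto its boundary only increases the form.
  On the ellipse the form is at most \<Lambda>^2\<parallel>x\<parallel>^2, because \<Lambda>^2 is the larger root \<lambda> of
  \<lambda>^2 - (\<mu>^2 + \<nu>^2 + 2\<mu>\<nu>cd)\<lambda> + \<mu>^2\<nu>^2(1 - c^2)(1 - d^2), the value for which \<lambda> times the
  ellipse form minus (1 - d^2) times the quadratic form is positive semidefinite with
  vanishing determinant.\<close>

lemma quadratic_form_nonneg:
  fixes A B C x y :: real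
  assumes "0 \<le> A" "0 \<le> C" "A * C = B^2"
  shows "0 \<le> A*x^2 + 2*B*x*y + C*y^2"
proof (cases "A = 0")
  case True
  then show ?thesis using assms by simp
next
  case False
  then have "A > 0" using assms by simp
  moreover have "A * (A*x^2 + 2*B*x*y + C*y^2) = (A*x + B*y)^2"
    using assms(3) by (simp add: power2_eq_square algebra_simps)
  ultimately show ?thesis by (metis zero_le_mult_iff zero_le_power2 not_less)
qed

definition larger_root :: "real \<Rightarrow> real \<Rightarrow> real" where
  "larger_root T D = (sqrt (T^2 - 4*D) + T) / 2"

lemma larger_root_is_root:
  assumes "4*D \<le> T^2"
  shows "(larger_root T D)^2 - T * larger_root T D + D = 0"
  using assms unfolding larger_root_def by (simp add: power2_eq_square field_simps)

lemma le_larger_root: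
  assumes "4*D \<le> T^2" and "x^2 - T*x + D \<le> 0"
  shows "x \<le> larger_root T D"
proof -
  have "(x - T/2)^2 \<le> (sqrt (T^2 - 4*D) / 2)^2"
    using assms by (simp add: power_divide power2_eq_square field_simps)
  then have "x - T/2 \<le> sqrt (T^2 - 4*D) / 2"
    by (rule power2_le_imp_le) (use assms(1) in simp)
  then show ?thesis unfolding larger_root_def by simp
qed

definition Lambda2_cos :: "real \<Rightarrow> real \<Rightarrow> real \<Rightarrow> real \<Rightarrow> real" where
  "Lambda2_cos \<mu> \<nu> c d =
     larger_root (\<mu>^2 + \<nu>^2 + 2*\<mu>*\<nu>*c*d) (\<mu>^2*\<nu>^2*(1 - c^2)*(1 - d^2))"

lemma Lambda2_arccos:
  assumes "\<bar>c\<bar> \<le> 1" "\<bar>d\<bar> \<le> 1"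
  shows "Lambda2 \<mu> \<nu> (arccos c) (arccos d) = Lambda2_cos \<mu> \<nu> c d"
  using assms abs_square_le_1[of c] abs_square_le_1[of d]
  by (simp add: Lambda2_def Lambda2_cos_def larger_root_def sin_arccos_abs algebra_simps)

lemma Lambda2_cos_commute: "Lambda2_cos \<nu> \<mu> c d = Lambda2_cos \<mu> \<nu> c d"
  by (simp add: Lambda2_cos_def algebra_simps)

context
  fixes \<mu> \<nu> c d :: real
  assumes norms: "0 \<le> \<mu>" "0 \<le> \<nu>" and c: "0 \<le> c" "c \<le> 1" and d: "0 \<le> d" "d \<le> 1"
begin

lemma Lambda2_cos_discriminant:
  "4*(\<mu>^2*\<nu>^2*(1 - c^2)*(1 - d^2)) \<le> (\<mu>^2 + \<nu>^2 + 2*\<mu>*\<nu>*c*d)^2"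
proof -
  have "(1 - c^2)*(1 - d^2) \<le> 1"
    using c d by (intro mult_le_one) (auto simp: power_le_one)
  then have "\<mu>^2*\<nu>^2*(1 - c^2)*(1 - d^2) \<le> \<mu>^2*\<nu>^2"
    using mult_left_le[of "(1 - c^2)*(1 - d^2)" "\<mu>^2*\<nu>^2"] by (simp add: mult.assoc)
  moreover have "4*(\<mu>^2*\<nu>^2) \<le> (\<mu>^2 + \<nu>^2)^2"
    using zero_le_power2[of "\<mu>^2 - \<nu>^2"] by (simp add: power2_eq_square algebra_simps)
  moreover have "(\<mu>^2 + \<nu>^2)^2 \<le> (\<mu>^2 + \<nu>^2 + 2*\<mu>*\<nu>*c*d)^2"
    using norms c d by (intro power_mono) auto
  ultimately show ?thesis by linarith
qed

lemma Lambda2_cos_root: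
  "(Lambda2_cos \<mu> \<nu> c d)^2 - (\<mu>^2 + \<nu>^2 + 2*\<mu>*\<nu>*c*d) * Lambda2_cos \<mu> \<nu> c d
     + \<mu>^2*\<nu>^2*(1 - c^2)*(1 - d^2) = 0"
  unfolding Lambda2_cos_def by (rule larger_root_is_root[OF Lambda2_cos_discriminant])

lemma Lambda2_cos_ge:
  "(1 - d^2)*\<mu>^2 \<le> Lambda2_cos \<mu> \<nu> c d" "(1 - d^2)*\<nu>^2 \<le> Lambda2_cos \<mu> \<nu> c d"
proof -
  have "((1 - d^2)*x^2)^2 - (x^2 + y^2 + 2*x*y*c*d)*((1 - d^2)*x^2) + x^2*y^2*(1 - c^2)*(1 - d^2)
      \<le> 0" for x y
  proof -
    have "0 \<le> (1 - d^2)*x^2*(d*x + c*y)^2"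
      using d by (simp add: power_le_one)
    moreover have "((1 - d^2)*x^2)^2 - (x^2 + y^2 + 2*x*y*c*d)*((1 - d^2)*x^2)
        + x^2*y^2*(1 - c^2)*(1 - d^2) = - ((1 - d^2)*x^2*(d*x + c*y)^2)"
      by (simp add: power2_eq_square algebra_simps)
    ultimately show ?thesis by linarith
  qed
  note le = this
  show "(1 - d^2)*\<mu>^2 \<le> Lambda2_cos \<mu> \<nu> c d"
    unfolding Lambda2_cos_def by (rule le_larger_root[OF Lambda2_cos_discriminant le])
  show "(1 - d^2)*\<nu>^2 \<le> Lambda2_cos \<mu> \<nu> c d"
  proof -
    have "\<nu>^2 + \<mu>^2 + 2*\<nu>*\<mu>*c*d = \<mu>^2 + \<nu>^2 + 2*\<mu>*\<nu>*c*d"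
      "\<nu>^2*\<mu>^2*(1 - c^2)*(1 - d^2) = \<mu>^2*\<nu>^2*(1 - c^2)*(1 - d^2)"
      by (simp_all add: ac_simps)
    then show ?thesis
      unfolding Lambda2_cos_def using le[of \<nu> \<mu>]
      by (metis le_larger_root[OF Lambda2_cos_discriminant])
  qed
qed

lemma Lambda2_cos_of_1: "d = 1 \<Longrightarrow> Lambda2_cos \<mu> \<nu> c d = \<mu>^2 + \<nu>^2 + 2*\<mu>*\<nu>*c"
  using norms c by (simp add: Lambda2_cos_def larger_root_def)

lemma quadratic_form_le_Lambda2_cos:
  fixes t1 t2 n :: real
  assumes t: "0 \<le> t1" "t1 \<le> n" "0 \<le> t2"
    and ellipse: "t1^2 + t2^2 - 2*d*t1*t2 \<le> (1 - d^2)*n^2"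
  shows "\<mu>^2*t1^2 + \<nu>^2*t2^2 + 2*c*\<mu>*\<nu>*t1*t2 \<le> Lambda2_cos \<mu> \<nu> c d * n^2"
proof (cases "d = 1")
  case True
  then have "(t1 - t2)^2 \<le> 0" using ellipse by (simp add: power2_eq_square algebra_simps)
  then have "t2 = t1" by simp
  have "t1^2 \<le> n^2" using t by (simp add: power_mono)
  then have "(\<mu>^2 + \<nu>^2 + 2*\<mu>*\<nu>*c) * t1^2 \<le> (\<mu>^2 + \<nu>^2 + 2*\<mu>*\<nu>*c) * n^2"
    using norms c by (intro mult_left_mono) auto
  then show ?thesis using \<open>t2 = t1\<close> Lambda2_cos_of_1[OF True]
    by (simp add: power2_eq_square algebra_simps)
next
  case False
  define s where "s = 1 - d^2"
  define lam where "lam = Lambda2_cos \<mu> \<nu> c d"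
  have "0 < s" using d False abs_square_less_1[of d] unfolding s_def by simp
  have ge: "s*\<mu>^2 \<le> lam" "s*\<nu>^2 \<le> lam" using Lambda2_cos_ge unfolding s_def lam_def .
  have "(lam - s*\<mu>^2)*(lam - s*\<nu>^2) - (-(lam*d + s*c*\<mu>*\<nu>))^2
      = s*(lam^2 - (\<mu>^2 + \<nu>^2 + 2*\<mu>*\<nu>*c*d)*lam + \<mu>^2*\<nu>^2*(1 - c^2)*(1 - d^2))"
    unfolding s_def by (simp add: power2_eq_square algebra_simps)
  then have "(lam - s*\<mu>^2)*(lam - s*\<nu>^2) = (-(lam*d + s*c*\<mu>*\<nu>))^2"
    using Lambda2_cos_root by (simp add: lam_def)
  with ge have
    "0 \<le> (lam - s*\<mu>^2)*t1^2 + 2*(-(lam*d + s*c*\<mu>*\<nu>))*t1*t2 + (lam - s*\<nu>^2)*t2^2"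
    by (intro quadratic_form_nonneg) auto
  also have "\<dots> = lam*(t1^2 + t2^2 - 2*d*t1*t2)
      - s*(\<mu>^2*t1^2 + \<nu>^2*t2^2 + 2*c*\<mu>*\<nu>*t1*t2)"
    by (simp add: algebra_simps)
  finally have "s*(\<mu>^2*t1^2 + \<nu>^2*t2^2 + 2*c*\<mu>*\<nu>*t1*t2) \<le> lam*(t1^2 + t2^2 - 2*d*t1*t2)"
    by simp
  also have "\<dots> \<le> lam*(s*n^2)"
  proof (rule mult_left_mono)
    show "t1^2 + t2^2 - 2*d*t1*t2 \<le> s*n^2" using ellipse unfolding s_def .
    show "0 \<le> lam" using ge(1) \<open>0 < s\<close> by (smt (verit) mult_nonneg_nonneg zero_le_power2)
  qed
  finally have "s*(\<mu>^2*t1^2 + \<nu>^2*t2^2 + 2*c*\<mu>*\<nu>*t1*t2) \<le> s*(lam*n^2)"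
    by (simp only: mult.left_commute)
  then show ?thesis using \<open>0 < s\<close> unfolding lam_def by simp
qed

lemma quadratic_form_le_Lambda2_cos_if_dominated:
  fixes t1 t2 n :: real
  assumes t: "0 \<le> t1" "t1 \<le> n" "0 \<le> t2" and dom: "t2 \<le> d*t1"
  shows "\<mu>^2*t1^2 + \<nu>^2*t2^2 + 2*c*\<mu>*\<nu>*t1*t2 \<le> Lambda2_cos \<mu> \<nu> c d * n^2"
proof -
  have "\<nu>^2*t2^2 \<le> \<nu>^2*(d*t1)^2"
    using t dom by (intro mult_left_mono power_mono) auto
  moreover have "c*\<mu>*\<nu>*t1*t2 \<le> c*\<mu>*\<nu>*t1*(d*t1)"
    using t dom norms c by (intro mult_left_mono) auto
  ultimately have "\<mu>^2*t1^2 + \<nu>^2*t2^2 + 2*c*\<mu>*\<nu>*t1*t2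
      \<le> \<mu>^2*t1^2 + \<nu>^2*(d*t1)^2 + 2*c*\<mu>*\<nu>*t1*(d*t1)"
    by linarith
  also have "\<dots> \<le> Lambda2_cos \<mu> \<nu> c d * n^2"
  proof (rule quadratic_form_le_Lambda2_cos)
    have "(1 - d^2)*t1^2 \<le> (1 - d^2)*n^2"
      using t d by (intro mult_left_mono power_mono) (auto simp: power_le_one)
    then show "t1^2 + (d*t1)^2 - 2*d*t1*(d*t1) \<le> (1 - d^2)*n^2"
      by (simp add: power2_eq_square algebra_simps)
  qed (use t d in auto)
  finally show ?thesis .
qed

end

lemma ellipse_of_row_constraint:
  fixes d t1 t2 n :: real
  assumes d: "0 \<le> d" "d \<le> 1" and t: "0 \<le> t1" "t1 \<le> n" "0 \<le> t2" "t2 \<le> n"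
    and between: "d*t1 \<le> t2" "d*t2 \<le> t1"
    and row: "\<And>s r. 0 \<le> s \<Longrightarrow> 0 \<le> r \<Longrightarrow>
      (s*t1^2 + r*t2^2)^2 \<le> n^2*((s*t1)^2 + (r*t2)^2 + 2*d*(s*t1)*(r*t2))"
  shows "t1^2 + t2^2 - 2*d*t1*t2 \<le> (1 - d^2)*n^2"
proof -
  have d2: "0 \<le> 1 - d^2" using d by (simp add: power_le_one)
  have degenerate: "x^2 + y^2 - 2*d*x*y \<le> (1 - d^2)*n^2"
    if "x = 0" "0 \<le> y" "y \<le> n" "d*y \<le> 0" for x y
  proof -
    have "d*y = 0" using that d by (simp add: mult_le_0_iff) (smt (verit) mult_nonneg_nonneg)
    then have "x^2 + y^2 - 2*d*x*y = (1 - d^2)*y^2"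
      using \<open>x = 0\<close> by (simp add: power2_eq_square algebra_simps)
    also have "\<dots> \<le> (1 - d^2)*n^2"
      using that d2 by (intro mult_left_mono power_mono) auto
    finally show ?thesis .
  qed
  consider "t1 = 0" | "t2 = 0" | "0 < t1" "0 < t2" using t by linarith
  then show ?thesis
  proof cases
    case 1
    then show ?thesis using degenerate[of t1 t2] t between by simp
  next
    case 2
    then show ?thesis using degenerate[of t2 t1] t between by (simp add: algebra_simps)
  next
    case 3
    define e where "e = t1^2 + t2^2 - 2*d*t1*t2"
    \<comment> \<open>With these weights both sides of the row constraint are multiples of e.\<close>
    have "(t2*(t1 - d*t2)*t1^2 + t1*(t2 - d*t1)*t2^2)^2 \<le>
        n^2*((t2*(t1 - d*t2)*t1)^2 + (t1*(t2 - d*t1)*t2)^2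
             + 2*d*(t2*(t1 - d*t2)*t1)*(t1*(t2 - d*t1)*t2))"
      using t between by (intro row) auto
    moreover have "t2*(t1 - d*t2)*t1^2 + t1*(t2 - d*t1)*t2^2 = (t1*t2)*e"
      unfolding e_def by (simp add: power2_eq_square algebra_simps)
    moreover have "(t2*(t1 - d*t2)*t1)^2 + (t1*(t2 - d*t1)*t2)^2
        + 2*d*(t2*(t1 - d*t2)*t1)*(t1*(t2 - d*t1)*t2) = (t1*t2)^2*((1 - d^2)*e)"
      unfolding e_def by (simp add: power2_eq_square algebra_simps)
    ultimately have "(t1*t2)^2*(e*e) \<le> (t1*t2)^2*(((1 - d^2)*n^2)*e)"
      by (simp add: power_mult_distrib power2_eq_square mult_ac)
    moreover have "0 < (t1*t2)^2" using 3 by simp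
    ultimately have "e*e \<le> ((1 - d^2)*n^2)*e" by (rule mult_left_le_imp_le)
    then have "e \<le> (1 - d^2)*n^2 \<or> e \<le> 0"
      by (metis mult_le_cancel_right not_less)
    moreover have "0 \<le> (1 - d^2)*n^2" using d2 by simp
    ultimately show ?thesis unfolding e_def by linarith
  qed
qed

lemma quadratic_form_le_Lambda2_cos_of_row_constraint:
  fixes \<mu> \<nu> c d t1 t2 n :: real
  assumes norms: "0 \<le> \<mu>" "0 \<le> \<nu>" and c: "0 \<le> c" "c \<le> 1" and d: "0 \<le> d" "d \<le> 1"
    and t: "0 \<le> t1" "t1 \<le> n" "0 \<le> t2" "t2 \<le> n"
    and row: "\<And>s r. 0 \<le> s \<Longrightarrow> 0 \<le> r \<Longrightarrow>
      (s*t1^2 + r*t2^2)^2 \<le> n^2*((s*t1)^2 + (r*t2)^2 + 2*d*(s*t1)*(r*t2))"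
  shows "\<mu>^2*t1^2 + \<nu>^2*t2^2 + 2*c*\<mu>*\<nu>*t1*t2 \<le> Lambda2_cos \<mu> \<nu> c d * n^2"
proof -
  consider "d*t1 \<le> t2" "d*t2 \<le> t1" | "t2 \<le> d*t1" | "t1 \<le> d*t2" by linarith
  then show ?thesis
  proof cases
    case 1
    then show ?thesis
      using quadratic_form_le_Lambda2_cos[OF norms c d t(1-3) ellipse_of_row_constraint[OF d t 1 row]]
      by simp
  next
    case 2
    then show ?thesis using quadratic_form_le_Lambda2_cos_if_dominated[OF norms c d t(1-3)] by simp
  next
    case 3
    then show ?thesis
      using quadratic_form_le_Lambda2_cos_if_dominated[OF norms(2,1) c d t(3,4,1)]
      by (simp add: Lambda2_cos_commute algebra_simps)
  qed
qed

lemma sum_sq_le_Lambda2_cos_of_row_constraint: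
  fixes \<mu> \<nu> c d a b n :: real
  assumes norms: "0 < \<mu>" "0 < \<nu>" and c: "0 \<le> c" "c \<le> 1" and d: "0 \<le> d" "d \<le> 1"
    and ab: "0 \<le> a" "a \<le> \<mu>*n" "0 \<le> b" "b \<le> \<nu>*n"
    and row: "\<And>\<alpha> \<beta>. 0 \<le> \<alpha> \<Longrightarrow> 0 \<le> \<beta> \<Longrightarrow>
      (\<alpha>*a^2 + \<beta>*b^2)^2 \<le> n^2*((\<alpha>*\<mu>*a)^2 + (\<beta>*\<nu>*b)^2 + 2*d*(\<alpha>*\<mu>*a)*(\<beta>*\<nu>*b))"
  shows "a^2 + b^2 + 2*c*a*b \<le> Lambda2_cos \<mu> \<nu> c d * n^2"
proof -
  define t1 where "t1 = a/\<mu>"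
  define t2 where "t2 = b/\<nu>"
  have a: "a = \<mu>*t1" and b: "b = \<nu>*t2" unfolding t1_def t2_def using norms by simp_all
  have "\<mu>^2*t1^2 + \<nu>^2*t2^2 + 2*c*\<mu>*\<nu>*t1*t2 \<le> Lambda2_cos \<mu> \<nu> c d * n^2"
  proof (rule quadratic_form_le_Lambda2_cos_of_row_constraint)
    show "0 \<le> t1" "t1 \<le> n" "0 \<le> t2" "t2 \<le> n"
      using ab norms unfolding t1_def t2_def by (simp_all add: field_simps)
    fix s r :: real
    assume "0 \<le> s" "0 \<le> r"
    then show "(s*t1^2 + r*t2^2)^2 \<le> n^2*((s*t1)^2 + (r*t2)^2 + 2*d*(s*t1)*(r*t2))"
      using row[of "s/\<mu>^2" "r/\<nu>^2"] norms unfolding a b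
      by (simp add: power2_eq_square field_simps)
  qed (use norms c d in auto)
  then show ?thesis unfolding a b by (simp add: power2_eq_square algebra_simps)
qed

lemma power2_norm_add_le:
  fixes p q :: "'a::real_inner"
  assumes "p \<bullet> q \<le> d * norm p * norm q" "0 \<le> d" "norm p \<le> P" "norm q \<le> Q"
  shows "(norm (p + q))^2 \<le> P^2 + Q^2 + 2*d*P*Q"
proof -
  have "(norm (p + q))^2 = (norm p)^2 + (norm q)^2 + 2*(p \<bullet> q)"
    by (simp add: power2_norm_eq_inner inner_add_left inner_add_right inner_commute)
  also have "\<dots> \<le> (norm p)^2 + (norm q)^2 + 2*(d * norm p * norm q)"
    using assms(1) by simp
  also have "\<dots> \<le> P^2 + Q^2 + 2*d*P*Q"
  proof -
    have "(norm p)^2 \<le> P^2" "(norm q)^2 \<le> Q^2"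
      using assms(3,4) by (auto intro: power_mono)
    moreover have "d * norm p * norm q \<le> d * P * Q"
      using assms(2-4) order_trans[OF norm_ge_zero assms(3)]
      by (intro mult_mono mult_left_mono) auto
    ultimately show ?thesis by linarith
  qed
  finally show ?thesis by simp
qed

lemma transpose_eq_0_iff [simp]: "transpose A = 0 \<longleftrightarrow> A = 0"
proof -
  have "transpose (0::'a::zero^'n^'m) = 0" by (simp add: transpose_def vec_eq_iff)
  then show ?thesis by (metis transpose_iff)
qed

lemma ex_matrix_vector_mult_nonzero:
  fixes A :: "real^'n^'m"
  assumes "A \<noteq> 0"
  shows "\<exists>x. A *v x \<noteq> 0"
  using assms matrix_eq[of A 0] by auto

lemma norm_matrix_vector_mult_le: "norm (M *v x) \<le> spec_norm M * norm x"
  unfolding spec_norm_def by (rule onorm) simp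

lemma spec_norm_nonneg: "0 \<le> spec_norm M"
  unfolding spec_norm_def by (rule onorm_pos_le) simp

lemma spec_norm_pos: "M \<noteq> 0 \<Longrightarrow> 0 < spec_norm M"
  unfolding spec_norm_def using onorm_pos_lt[of "\<lambda>x. M *v x"] ex_matrix_vector_mult_nonzero
  by auto

lemma norm_vector_matrix_mult_le: "norm (y v* M) \<le> spec_norm M * norm y"
proof -
  have "(norm (y v* M))^2 = y \<bullet> (M *v (y v* M))"
    by (simp add: power2_norm_eq_inner dot_lmul_matrix)
  also have "\<dots> \<le> norm y * norm (M *v (y v* M))"
    by (rule norm_cauchy_schwarz)
  also have "\<dots> \<le> norm y * (spec_norm M * norm (y v* M))"
    by (simp add: mult_left_mono norm_matrix_vector_mult_le)
  finally have "norm (y v* M) * norm (y v* M) \<le> (spec_norm M * norm y) * norm (y v* M)"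
    by (simp add: power2_eq_square mult_ac)
  then show ?thesis
    using spec_norm_nonneg[of M] by (cases "y v* M = 0") auto
qed

lemma spec_norm_power2_le:
  assumes "\<And>x. (norm (M *v x))^2 \<le> L * (norm x)^2"
  shows "(spec_norm M)^2 \<le> L"
proof -
  have "spec_norm M \<le> sqrt L"
    unfolding spec_norm_def
  proof (rule onorm_le)
    fix x
    show "norm (M *v x) \<le> sqrt L * norm x"
      using real_sqrt_le_mono[OF assms[of x]] by (simp add: real_sqrt_mult)
  qed
  with spec_norm_nonneg[of M] have "0 \<le> L" by (smt (verit) real_sqrt_lt_0_iff)
  with \<open>spec_norm M \<le> sqrt L\<close> show ?thesis
    using spec_norm_nonneg power_mono by (metis real_sqrt_pow2)
qed

lemma cos_principal_angle_upper:
  assumes "M1 *v u1 \<noteq> 0" "M2 *v u2 \<noteq> 0"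
  shows "(M1 *v u1) \<bullet> (M2 *v u2) / (norm (M1 *v u1) * norm (M2 *v u2))
    \<le> cos_principal_angle M1 M2"
  unfolding cos_principal_angle_def
proof (rule cSup_upper)
  show "bdd_above {(M1 *v u1) \<bullet> (M2 *v u2) / (norm (M1 *v u1) * norm (M2 *v u2)) | u1 u2.
      M1 *v u1 \<noteq> 0 \<and> M2 *v u2 \<noteq> 0}"
    by (rule bdd_aboveI[of _ 1])
      (auto simp: divide_le_eq_1 norm_cauchy_schwarz intro: order.strict_implies_order)
qed (use assms in blast)

lemma cos_principal_angle_inner_le:
  "(M1 *v u1) \<bullet> (M2 *v u2) \<le> cos_principal_angle M1 M2 * norm (M1 *v u1) * norm (M2 *v u2)"
proof (cases "M1 *v u1 = 0 \<or> M2 *v u2 = 0")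
  case False
  then show ?thesis
    using cos_principal_angle_upper[of M1 u1 M2 u2] by (simp add: divide_le_eq mult.assoc)
qed auto

lemma cos_principal_angle_nonneg:
  assumes "M1 \<noteq> 0" "M2 \<noteq> 0"
  shows "0 \<le> cos_principal_angle M1 M2"
proof -
  obtain u1 u2 where "M1 *v u1 \<noteq> 0" "M2 *v u2 \<noteq> 0"
    using assms ex_matrix_vector_mult_nonzero by metis
  moreover have "M1 *v (-u1) = - (M1 *v u1)"
    by (metis scaleR_minus1_left matrix_vector_mult_scaleR)
  ultimately show ?thesis
    using cos_principal_angle_upper[of M1 u1 M2 u2] cos_principal_angle_upper[of M1 "-u1" M2 u2]
    by simp
qed

lemma cos_principal_angle_le_one:
  assumes "M1 \<noteq> 0" "M2 \<noteq> 0"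
  shows "cos_principal_angle M1 M2 \<le> 1"
proof -
  obtain u1 u2 where "M1 *v u1 \<noteq> 0" "M2 *v u2 \<noteq> 0"
    using assms ex_matrix_vector_mult_nonzero by metis
  then show ?thesis
    unfolding cos_principal_angle_def
    by (intro cSup_least)
      (auto simp: divide_le_eq_1 norm_cauchy_schwarz intro: order.strict_implies_order)
qed

lemma row_space_constraint:
  fixes M1 M2 :: "real^'n^'m" and x :: "real^'n"
  assumes "M1 \<noteq> 0" "M2 \<noteq> 0" "0 \<le> \<alpha>" "0 \<le> \<beta>"
  defines "a \<equiv> norm (M1 *v x)" and "b \<equiv> norm (M2 *v x)"
    and "d \<equiv> cos_principal_angle (transpose M1) (transpose M2)"
  shows "(\<alpha>*a^2 + \<beta>*b^2)^2 \<le> (norm x)^2 *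
    ((\<alpha> * spec_norm M1 * a)^2 + (\<beta> * spec_norm M2 * b)^2
     + 2*d*(\<alpha> * spec_norm M1 * a)*(\<beta> * spec_norm M2 * b))"
proof -
  define p where "p = \<alpha> *\<^sub>R ((M1 *v x) v* M1)"
  define q where "q = \<beta> *\<^sub>R ((M2 *v x) v* M2)"
  have "x \<bullet> ((M *v x) v* M) = (norm (M *v x))^2" for M :: "real^'n^'m"
    by (simp add: inner_commute[of x] dot_lmul_matrix power2_norm_eq_inner)
  then have "x \<bullet> (p + q) = \<alpha>*a^2 + \<beta>*b^2"
    unfolding p_def q_def a_def b_def by (simp add: inner_add_right)
  then have cs: "(\<alpha>*a^2 + \<beta>*b^2)^2 \<le> (norm x)^2 * (norm (p + q))^2"
    using Cauchy_Schwarz_ineq[of x "p + q"] by (simp add: power2_norm_eq_inner)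
  have "(norm (p + q))^2
      \<le> (\<alpha> * spec_norm M1 * a)^2 + (\<beta> * spec_norm M2 * b)^2
         + 2*d*(\<alpha> * spec_norm M1 * a)*(\<beta> * spec_norm M2 * b)"
  proof (rule power2_norm_add_le)
    have "(\<alpha>*\<beta>) * (((M1 *v x) v* M1) \<bullet> ((M2 *v x) v* M2))
        \<le> (\<alpha>*\<beta>) * (d * norm ((M1 *v x) v* M1) * norm ((M2 *v x) v* M2))"
      using cos_principal_angle_inner_le[of "transpose M1" "M1 *v x" "transpose M2" "M2 *v x"]
        assms(3,4)
      unfolding d_def by (intro mult_left_mono) simp_all
    then show "p \<bullet> q \<le> d * norm p * norm q"
      unfolding p_def q_def using assms(3,4) by (simp add: abs_of_nonneg mult_ac)
    show "0 \<le> d" unfolding d_def using assms by (simp add: cos_principal_angle_nonneg)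
    show "norm p \<le> \<alpha> * spec_norm M1 * a" "norm q \<le> \<beta> * spec_norm M2 * b"
      unfolding p_def q_def a_def b_def using assms(3,4)
      by (simp_all add: mult.assoc mult_left_mono norm_vector_matrix_mult_le)
  qed
  with cs show ?thesis by (meson mult_left_mono zero_le_power2 order_trans)
qed

theorem lemma2:
  fixes M1 M2 :: "real^'n^'m"
  assumes "M1 \<noteq> 0" and "M2 \<noteq> 0"
  shows "(spec_norm (M1 + M2))^2 \<le>
           Lambda2 (spec_norm M1) (spec_norm M2)
                   (principal_angle M1 M2)
                   (principal_angle (transpose M1) (transpose M2))"
proof -
  define c where "c = cos_principal_angle M1 M2"
  define d where "d = cos_principal_angle (transpose M1) (transpose M2)"
  have c: "0 \<le> c" "c \<le> 1" and d: "0 \<le> d" "d \<le> 1"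
    unfolding c_def d_def using assms
    by (simp_all add: cos_principal_angle_nonneg cos_principal_angle_le_one)
  have "(norm ((M1 + M2) *v x))^2 \<le> Lambda2_cos (spec_norm M1) (spec_norm M2) c d * (norm x)^2"
    for x
  proof -
    have "(norm ((M1 + M2) *v x))^2
        \<le> (norm (M1 *v x))^2 + (norm (M2 *v x))^2 + 2*c*norm (M1 *v x)*norm (M2 *v x)"
      unfolding matrix_vector_mult_add_rdistrib c_def
      by (rule power2_norm_add_le)
        (simp_all add: cos_principal_angle_inner_le cos_principal_angle_nonneg assms)
    also have "\<dots> \<le> Lambda2_cos (spec_norm M1) (spec_norm M2) c d * (norm x)^2"
      using assms c d row_space_constraint[OF assms] unfolding d_def
      by (intro sum_sq_le_Lambda2_cos_of_row_constraint)
        (simp_all add: spec_norm_pos norm_matrix_vector_mult_le)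
    finally show ?thesis .
  qed
  then have "(spec_norm (M1 + M2))^2 \<le> Lambda2_cos (spec_norm M1) (spec_norm M2) c d"
    by (rule spec_norm_power2_le)
  then show ?thesis
    unfolding principal_angle_def c_def[symmetric] d_def[symmetric]
    using c d by (simp add: Lambda2_arccos)
qed

end
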